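(* Let $r=r(n)\ge3$ be an integer with $r=o(n^{1/2})$, and let $m=m(n)$ be a nonnegative integer. Let $t$ and $\alpha$ be integers with $t=O(1)$ and $0\le\alpha\le rt$. If $H$ is chosen uniformly at random from $\mathcal{H}_r(n,m)$, then the expected number of sets of $t$ edges of $H$ whose union has at most $rt-\alpha$ vertices is $O\bigl(t^\alpha r^{2\alpha}m^tn^{-\alpha}\bigr)$ as $n\to\infty$.
   Context: $\mathcal{H}_r(n,m)$ is the set of all $r$-uniform hypergraphs on vertex set $[n]$ with exactly $m$ edges (each edge an $r$-subset of $[n]$). *)

theory Defs
  imports Main "HOL-Library.Landau_Symbols"
begin

definition hypergraphs :: "nat \<Rightarrow> nat \<Rightarrow> nat \<Rightarrow> nat set set set" where
  "hypergraphs r n m =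
     {E. E \<subseteq> {e. e \<subseteq> {1..n} \<and> card e = r} \<and> card E = m}"

definition small_union_count :: "nat set set \<Rightarrow> nat \<Rightarrow> nat \<Rightarrow> nat" where
  "small_union_count H t k = card {S. S \<subseteq> H \<and> card S = t \<and> card (\<Union>S) \<le> k}"

definition uniform_expectation :: "nat \<Rightarrow> nat \<Rightarrow> nat \<Rightarrow> (nat set set \<Rightarrow> real) \<Rightarrow> real" where
  "uniform_expectation r n m f =
     (\<Sum>H\<in>hypergraphs r n m. f H) / real (card (hypergraphs r n m))"

end

theory Submission
  imports Defs Complex_Main
begin

(* Linearity of expectation bounds the expectation by the number of t-sets of r-subsets of [n]
   whose union has at most rt - alpha vertices, times (m/N)^t with N = (n choose r): a fixed
   t-set of edges lies in a uniform m-edge hypergraph with probability at most (m/N)^t.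
   Such t-sets are counted through ordered sequences, each weighted by z^(rt - |union|) with
   z = n/(r^2 t).  Adding an edge e to a current vertex set V multiplies the weight by
   z^|V \<inter> e|, and the sum of z^|V \<inter> e| over all r-sets e is at most exp(1) N as long as
   z r |V| \<le> n.  Hence there are at most (exp(1) N)^t z^(-alpha) sequences, which gives the bound
   exp(t) m^t (r^2 t / n)^alpha; the hypotheses r = o(sqrt n), t = O(1) make r^2 t \<le> n eventually. *)

definition k_subsets :: "'a set \<Rightarrow> nat \<Rightarrow> 'a set set" where
  "k_subsets X k = {E. E \<subseteq> X \<and> card E = k}"

lemma finite_k_subsets: "finite X \<Longrightarrow> finite (k_subsets X k)"
  unfolding k_subsets_def by (rule finite_subset[of _ "Pow X"]) auto

lemma card_k_subsets: "finite X \<Longrightarrow> card (k_subsets X k) = card X choose k"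
  unfolding k_subsets_def by (rule n_subsets)

lemma finite_of_mem_k_subsets: "finite X \<Longrightarrow> E \<in> k_subsets X k \<Longrightarrow> finite E"
  unfolding k_subsets_def by (auto intro: finite_subset)

lemma card_of_mem_k_subsets: "E \<in> k_subsets X k \<Longrightarrow> card E = k"
  unfolding k_subsets_def by simp

lemma hypergraphs_eq_k_subsets: "hypergraphs r n m = k_subsets (k_subsets {1..n} r) m"
  unfolding hypergraphs_def k_subsets_def ..

lemma small_union_count_eq:
  "small_union_count H t k = card {S \<in> k_subsets H t. card (\<Union>S) \<le> k}"
  unfolding small_union_count_def k_subsets_def by (simp add: conj_assoc)

lemma binomial_diff_le_power_ratio:
  assumes "a \<le> k" "k \<le> M"
  shows "real ((M - a) choose (k - a)) \<le> (real k / real M) ^ a * real (M choose k)"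
  using assms
proof (induction a arbitrary: M k)
  case 0
  then show ?case by simp
next
  case (Suc a)
  then obtain M' k' where M: "M = Suc M'" and k: "k = Suc k'" and le: "a \<le> k'" "k' \<le> M'"
    by (metis Suc_le_D Suc_le_mono le_trans)
  have ratio_mono: "real k' / real M' \<le> real k / real M"
    using le by (cases "M' = 0") (auto simp: M k divide_simps algebra_simps)
  have absorption: "real (M' choose k') = real k / real M * real (M choose k)"
    using Suc_times_binomial[of k' M'] unfolding M k by (simp add: field_simps flip: of_nat_mult)
  have "real ((M - Suc a) choose (k - Suc a)) = real ((M' - a) choose (k' - a))"
    by (simp add: M k)
  also have "\<dots> \<le> (real k' / real M') ^ a * real (M' choose k')"
    using Suc.IH le by blast
  also have "\<dots> \<le> (real k / real M) ^ a * real (M' choose k')"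
    using ratio_mono by (intro mult_right_mono power_mono) auto
  finally show ?case
    by (simp add: absorption mult_ac)
qed

lemma card_k_subsets_supset_le:
  assumes X: "finite X" and k: "k \<le> card X" and A: "finite A"
  shows "real (card {E \<in> k_subsets X k. A \<subseteq> E})
           \<le> (real k / real (card X)) ^ card A * real (card X choose k)"
proof (cases "A \<subseteq> X \<and> card A \<le> k")
  case True
  have "card {E \<in> k_subsets X k. A \<subseteq> E} \<le> card (k_subsets (X - A) (k - card A))"
  proof (rule card_inj_on_le[where f = "\<lambda>E. E - A"])
    show "inj_on (\<lambda>E. E - A) {E \<in> k_subsets X k. A \<subseteq> E}"
      by (rule inj_onI) blast
    show "(\<lambda>E. E - A) ` {E \<in> k_subsets X k. A \<subseteq> E} \<subseteq> k_subsets (X - A) (k - card A)"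
      using A by (auto simp: k_subsets_def card_Diff_subset)
  qed (use X in \<open>simp add: finite_k_subsets\<close>)
  also have "\<dots> = (card X - card A) choose (k - card A)"
    using X True by (simp add: card_k_subsets card_Diff_subset A)
  finally have "real (card {E \<in> k_subsets X k. A \<subseteq> E}) \<le> real ((card X - card A) choose (k - card A))"
    by (simp only: of_nat_le_iff)
  also have "\<dots> \<le> (real k / real (card X)) ^ card A * real (card X choose k)"
    using binomial_diff_le_power_ratio[of "card A" k "card X"] True k by blast
  finally show ?thesis .
next
  case False
  then have "{E \<in> k_subsets X k. A \<subseteq> E} = {}"
    using X by (auto simp: k_subsets_def dest: card_mono[OF finite_subset])
  then show ?thesis by (simp only: card.empty) simp
qed

lemma sum_Pow_power_card:
  fixes y :: "'b :: comm_semiring_1"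
  shows "finite B \<Longrightarrow> (\<Sum>A\<in>Pow B. y ^ card A) = (y + 1) ^ card B"
  using prod_add[of B "\<lambda>_. y" "\<lambda>_. 1"] by simp

lemma sum_k_subsets_power_card_Int_le:
  fixes z :: real
  assumes X: "finite X" and r: "r \<le> card X" and V: "finite V" and z: "z \<ge> 1"
    and small: "z * real r * real (card V) \<le> real (card X)"
  shows "(\<Sum>e\<in>k_subsets X r. z ^ card (V \<inter> e)) \<le> exp 1 * real (card X choose r)"
proof -
  define p where "p = real r / real (card X)"
  define N where "N = real (card X choose r)"
  have "z * p * real (card V) = z * real r * real (card V) / real (card X)"
    by (simp add: p_def)
  then have p: "p \<ge> 0" "z * p * real (card V) \<le> 1"
    using small by (auto simp: p_def divide_le_eq_1)
  \<comment> \<open>expand \<open>z ^ card (V \<inter> e)\<close> binomially and count the \<open>r\<close>-sets containing each \<open>A \<subseteq> V\<close>\<close>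
  have Pow_Int: "Pow (V \<inter> e) = {A \<in> Pow V. A \<subseteq> e}" for e
    by auto
  have expand: "z ^ card (V \<inter> e) = (\<Sum>A\<in>{A \<in> Pow V. A \<subseteq> e}. (z - 1) ^ card A)" for e
    using sum_Pow_power_card[of "V \<inter> e" "z - 1"] V unfolding Pow_Int by simp
  have "(\<Sum>e\<in>k_subsets X r. z ^ card (V \<inter> e))
      = (\<Sum>e\<in>k_subsets X r. \<Sum>A\<in>{A \<in> Pow V. A \<subseteq> e}. (z - 1) ^ card A)"
    by (simp only: expand)
  also have "\<dots> = (\<Sum>A\<in>Pow V. real (card {e \<in> k_subsets X r. A \<subseteq> e}) * (z - 1) ^ card A)"
    using X V by (subst sum.swap_restrict) (simp_all add: finite_k_subsets)
  also have "\<dots> \<le> (\<Sum>A\<in>Pow V. p ^ card A * N * (z - 1) ^ card A)"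
  proof (rule sum_mono)
    fix A assume "A \<in> Pow V"
    then have "finite A" using V finite_subset by auto
    then show "real (card {e \<in> k_subsets X r. A \<subseteq> e}) * (z - 1) ^ card A \<le> p ^ card A * N * (z - 1) ^ card A"
      using card_k_subsets_supset_le[OF X r] z unfolding p_def N_def
      by (intro mult_right_mono) auto
  qed
  also have "\<dots> = N * (\<Sum>A\<in>Pow V. ((z - 1) * p) ^ card A)"
    by (simp add: sum_distrib_left power_mult_distrib mult_ac)
  also have "\<dots> = N * (1 + (z - 1) * p) ^ card V"
    using sum_Pow_power_card[OF V, of "(z - 1) * p"] by (simp add: add.commute)
  also have "\<dots> \<le> N * exp ((z - 1) * p) ^ card V"
    using z p unfolding N_def by (intro mult_left_mono power_mono) auto
  also have "\<dots> = N * exp (real (card V) * ((z - 1) * p))"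
    by (simp add: exp_of_nat_mult)
  also have "\<dots> \<le> N * exp 1"
  proof -
    have "real (card V) * ((z - 1) * p) = z * p * real (card V) - p * real (card V)"
      by (simp add: algebra_simps)
    also have "\<dots> \<le> 1"
      using p mult_nonneg_nonneg[OF p(1) of_nat_0_le_iff[of "card V"]] by linarith
    finally show ?thesis
      unfolding N_def by (intro mult_left_mono) auto
  qed
  finally show ?thesis
    by (simp add: N_def mult.commute)
qed

lemma card_Union_set_le:
  assumes "\<forall>e\<in>set es. finite e \<and> card e \<le> r"
  shows "card (\<Union>(set es)) \<le> r * length es"
  using assms
proof (induction es)
  case (Cons e es)
  have "card (e \<union> \<Union>(set es)) \<le> card e + card (\<Union>(set es))"
    by (rule card_Un_le)
  with Cons show ?case by simp
qed simp

lemma sum_lists_power_overlap_le: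
  fixes z :: real
  assumes X: "finite X" and r: "r \<le> card X" and z: "z \<ge> 1"
    and V: "finite V" and small: "z * real r * real (card V + r * t) \<le> real (card X)"
  shows "(\<Sum>es\<in>{es. set es \<subseteq> k_subsets X r \<and> length es = t}.
            z ^ (card V + r * t - card (V \<union> \<Union>(set es))))
         \<le> (exp 1 * real (card X choose r)) ^ t"
  using V small
proof (induction t arbitrary: V)
  case 0
  have "{es. set es \<subseteq> k_subsets X r \<and> length es = 0} = {[]}"
    by auto
  then show ?case by simp
next
  case (Suc t)
  define R where "R = k_subsets X r"
  define Ls where "Ls = {es. set es \<subseteq> R \<and> length es = t}"
  define overlap where "overlap W es = card W + r * t - card (W \<union> \<Union>(set es))" for W :: "'a set" and es
  have R: "finite R" "\<And>e. e \<in> R \<Longrightarrow> finite e \<and> card e = r"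
    using X by (auto simp: R_def finite_k_subsets k_subsets_def intro: finite_subset)
  have Ls: "finite Ls"
    unfolding Ls_def using R(1) by (rule finite_lists_length_eq)
  have weight_split: "card V + r * Suc t - card (V \<union> \<Union>(set (e # es))) = card (V \<inter> e) + overlap (V \<union> e) es"
    if e: "e \<in> R" and es: "es \<in> Ls" for e es
  proof -
    have U: "card (\<Union>(set es)) \<le> r * t" "finite (\<Union>(set es))"
      using card_Union_set_le[of es r] es R(2) by (auto simp: Ls_def subset_iff)
    have "card V + r = card (V \<union> e) + card (V \<inter> e)"
      using card_Un_Int[OF Suc.prems(1), of e] R(2)[OF e] by simp
    moreover have "card (V \<union> e) \<le> card (V \<union> e \<union> \<Union>(set es))"
      using Suc.prems(1) R(2)[OF e] U by (intro card_mono) auto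
    moreover have "card (V \<union> e \<union> \<Union>(set es)) \<le> card (V \<union> e) + r * t"
      using card_Un_le[of "V \<union> e" "\<Union>(set es)"] U by linarith
    ultimately show ?thesis
      by (simp add: overlap_def Un_assoc)
  qed
  have IH: "(\<Sum>es\<in>Ls. z ^ overlap (V \<union> e) es) \<le> (exp 1 * real (card X choose r)) ^ t"
    if e: "e \<in> R" for e
  proof -
    have "card (V \<union> e) + r * t \<le> card V + r * Suc t"
      using card_Un_le[of V e] R(2)[OF e] by simp
    then have "z * real r * real (card (V \<union> e) + r * t) \<le> z * real r * real (card V + r * Suc t)"
      using z by (intro mult_left_mono) auto
    then have "z * real r * real (card (V \<union> e) + r * t) \<le> real (card X)"
      using Suc.prems(2) by linarith
    then show ?thesis
      using Suc.IH[of "V \<union> e"] Suc.prems(1) R(2)[OF e] by (simp add: Ls_def R_def overlap_def)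
  qed
  have inner: "(\<Sum>e\<in>R. z ^ card (V \<inter> e)) \<le> exp 1 * real (card X choose r)"
  proof -
    have "z * real r * real (card V) \<le> z * real r * real (card V + r * Suc t)"
      using z by (intro mult_left_mono) auto
    then show ?thesis
      unfolding R_def using sum_k_subsets_power_card_Int_le[OF X r Suc.prems(1) z] Suc.prems(2) by linarith
  qed
  have "(\<Sum>es\<in>{es. set es \<subseteq> R \<and> length es = Suc t}. z ^ (card V + r * Suc t - card (V \<union> \<Union>(set es))))
      = (\<Sum>es\<in>Ls. \<Sum>e\<in>R. z ^ (card V + r * Suc t - card (V \<union> \<Union>(set (e # es)))))"
    unfolding lists_length_Suc_eq Ls_def
    by (subst sum.reindex[OF inj_split_Cons]) (simp add: sum.cartesian_product case_prod_beta)
  also have "\<dots> = (\<Sum>e\<in>R. \<Sum>es\<in>Ls. z ^ (card V + r * Suc t - card (V \<union> \<Union>(set (e # es)))))"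
    by (rule sum.swap)
  also have "\<dots> = (\<Sum>e\<in>R. z ^ card (V \<inter> e) * (\<Sum>es\<in>Ls. z ^ overlap (V \<union> e) es))"
    unfolding sum_distrib_left by (intro sum.cong refl) (simp only: weight_split power_add)
  also have "\<dots> \<le> (\<Sum>e\<in>R. z ^ card (V \<inter> e) * (exp 1 * real (card X choose r)) ^ t)"
    using IH z by (intro sum_mono mult_left_mono) auto
  also have "\<dots> \<le> exp 1 * real (card X choose r) * (exp 1 * real (card X choose r)) ^ t"
    using inner by (simp add: sum_distrib_right[symmetric] mult_right_mono)
  finally show ?case
    by (simp add: R_def)
qed

lemma card_lists_small_union_le:
  fixes z :: real
  assumes X: "finite X" and r: "r \<le> card X" and z: "z \<ge> 1"
    and small: "z * real r * real (r * t) \<le> real (card X)" and \<alpha>: "\<alpha> \<le> r * t"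
  shows "real (card {es. set es \<subseteq> k_subsets X r \<and> length es = t \<and> card (\<Union>(set es)) \<le> r * t - \<alpha>}) * z ^ \<alpha>
           \<le> (exp 1 * real (card X choose r)) ^ t"
proof -
  define Ls where "Ls = {es. set es \<subseteq> k_subsets X r \<and> length es = t}"
  define L where "L = {es \<in> Ls. card (\<Union>(set es)) \<le> r * t - \<alpha>}"
  have Ls: "finite Ls"
    unfolding Ls_def using X by (intro finite_lists_length_eq finite_k_subsets)
  have "real (card L) * z ^ \<alpha> = (\<Sum>es\<in>L. z ^ \<alpha>)"
    by simp
  also have "\<dots> \<le> (\<Sum>es\<in>L. z ^ (r * t - card (\<Union>(set es))))"
    using z \<alpha> by (intro sum_mono power_increasing) (auto simp: L_def)
  also have "\<dots> \<le> (\<Sum>es\<in>Ls. z ^ (r * t - card (\<Union>(set es))))"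
    using Ls z by (intro sum_mono2) (auto simp: L_def)
  also have "\<dots> \<le> (exp 1 * real (card X choose r)) ^ t"
    using sum_lists_power_overlap_le[OF X r z, of "{}" t] small by (simp add: Ls_def)
  finally show ?thesis
    by (simp add: L_def Ls_def conj_assoc)
qed

lemma card_k_subsets_le_card_lists:
  assumes "finite R"
  shows "card {S \<in> k_subsets R t. P S} \<le> card {es. set es \<subseteq> R \<and> length es = t \<and> P (set es)}"
    (is "card ?S \<le> card ?L")
proof -
  have L: "finite ?L"
    using finite_lists_length_eq[OF assms, of t] by (rule rev_finite_subset) auto
  have "?S \<subseteq> set ` ?L"
  proof
    fix S assume S: "S \<in> ?S"
    then obtain es where "set es = S" "distinct es"
      using finite_distinct_list finite_of_mem_k_subsets[OF assms] by blast
    with S show "S \<in> set ` ?L"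
      by (auto simp: k_subsets_def distinct_card[symmetric])
  qed
  then have "card ?S \<le> card (set ` ?L)"
    using L by (intro card_mono) auto
  also have "\<dots> \<le> card ?L"
    by (rule card_image_le[OF L])
  finally show ?thesis .
qed

lemma uniform_expectation_small_union_count_le:
  "uniform_expectation r n m (\<lambda>H. real (small_union_count H t k))
     \<le> real (small_union_count (k_subsets {1..n} r) t k) * (real m / real (n choose r)) ^ t"
proof -
  define R where "R = k_subsets {1..n} r"
  define Good where "Good = {S \<in> k_subsets R t. card (\<Union>S) \<le> k}"
  have R: "finite R" "card R = n choose r"
    by (simp_all add: R_def finite_k_subsets card_k_subsets)
  have Good_sub: "Good \<subseteq> k_subsets R t"
    unfolding Good_def by blast
  have Good: "finite Good" "\<And>S. S \<in> Good \<Longrightarrow> finite S \<and> card S = t"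
    using Good_sub finite_k_subsets[OF R(1)] finite_of_mem_k_subsets[OF R(1)] card_of_mem_k_subsets
    by (meson finite_subset subsetD)+
  have Hyp: "hypergraphs r n m = k_subsets R m" "finite (k_subsets R m)"
    by (simp_all add: R_def hypergraphs_eq_k_subsets R(1) finite_k_subsets)
  show ?thesis
  proof (cases "m \<le> card R")
    case False
    then show ?thesis
      by (simp add: uniform_expectation_def Hyp card_k_subsets R(1) binomial_eq_0)
  next
    case True
    have count: "real (small_union_count H t k) = (\<Sum>S\<in>Good. if S \<subseteq> H then 1 else 0)"
      if "H \<in> k_subsets R m" for H
    proof -
      have "{S \<in> k_subsets H t. card (\<Union>S) \<le> k} = {S \<in> Good. S \<subseteq> H}"
        using that by (auto simp: Good_def k_subsets_def)
      then show ?thesis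
        using Good(1) by (simp add: small_union_count_eq sum.If_cases Int_def)
    qed
    have "(\<Sum>H\<in>k_subsets R m. real (small_union_count H t k))
        = (\<Sum>H\<in>k_subsets R m. \<Sum>S\<in>Good. if S \<subseteq> H then 1 else 0)"
      by (simp add: count)
    also have "\<dots> = (\<Sum>S\<in>Good. real (card {H \<in> k_subsets R m. S \<subseteq> H}))"
      using Hyp(2) by (subst sum.swap) (simp add: sum.If_cases Int_def)
    also have "\<dots> \<le> (\<Sum>S\<in>Good. (real m / real (card R)) ^ t * real (card R choose m))"
    proof (rule sum_mono)
      fix S assume "S \<in> Good"
      then show "real (card {H \<in> k_subsets R m. S \<subseteq> H}) \<le> (real m / real (card R)) ^ t * real (card R choose m)"
        using card_k_subsets_supset_le[OF R(1) True, of S] Good(2) by simp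
    qed
    finally have "(\<Sum>H\<in>k_subsets R m. real (small_union_count H t k))
        \<le> real (card Good) * (real m / real (card R)) ^ t * real (card R choose m)"
      by simp
    moreover have "small_union_count (k_subsets {1..n} r) t k = card Good"
      by (simp add: small_union_count_eq Good_def R_def)
    moreover have "real (card R choose m) > 0"
      using True by simp
    ultimately show ?thesis
      by (simp add: uniform_expectation_def Hyp card_k_subsets R(1) pos_divide_le_eq flip: R(2))
  qed
qed

lemma uniform_expectation_small_union_count_bound:
  fixes n r m t \<alpha> :: nat
  assumes r: "r \<ge> 1" and n: "r\<^sup>2 * max t 1 \<le> n" and \<alpha>: "\<alpha> \<le> r * t"
  shows "uniform_expectation r n m (\<lambda>H. real (small_union_count H t (r * t - \<alpha>)))
           \<le> exp (real t) * (real t ^ \<alpha> * real r ^ (2 * \<alpha>) * real m ^ t / real n ^ \<alpha>)"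
proof -
  \<comment> \<open>\<open>T\<close> avoids a division by zero for \<open>t = 0\<close>, where \<open>\<alpha> = 0\<close> anyway\<close>
  define T where "T = max t 1"
  define N where "N = real (n choose r)"
  define z where "z = real n / (real r ^ 2 * real T)"
  define L where "L = {es. set es \<subseteq> k_subsets {1..n} r \<and> length es = t \<and> card (\<Union>(set es)) \<le> r * t - \<alpha>}"
  have T: "T \<ge> 1" "r * t \<le> r * T"
    by (simp_all add: T_def)
  have rT: "real r ^ 2 * real T > 0"
    using r T by simp
  have "r \<le> r\<^sup>2 * T"
    using r T by (simp add: power2_eq_square)
  then have rn: "r \<le> n" "n > 0"
    using n r by (simp_all add: T_def)
  have N: "N > 0"
    using rn by (simp add: N_def)
  have z: "z \<ge> 1"
    using n rT by (simp add: z_def T_def field_simps flip: of_nat_power of_nat_mult)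
  have "r * (r * t) \<le> r\<^sup>2 * T"
    using T by (simp add: power2_eq_square)
  then have "real r * real (r * t) \<le> real r ^ 2 * real T"
    by (metis of_nat_le_iff of_nat_mult of_nat_power)
  then have "z * real r * real (r * t) \<le> z * real r ^ 2 * real T"
    using z by (simp add: mult.assoc mult_left_mono)
  also have "\<dots> = real n"
    using r T(1) by (simp add: z_def)
  finally have lists: "real (card L) * z ^ \<alpha> \<le> (exp 1 * N) ^ t"
    using card_lists_small_union_le[of "{1..n}" r z t \<alpha>] rn z \<alpha> by (simp add: L_def N_def)
  have sets: "small_union_count (k_subsets {1..n} r) t (r * t - \<alpha>) \<le> card L"
    unfolding small_union_count_eq L_def by (rule card_k_subsets_le_card_lists) (simp add: finite_k_subsets)
  have "uniform_expectation r n m (\<lambda>H. real (small_union_count H t (r * t - \<alpha>)))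
      \<le> real (small_union_count (k_subsets {1..n} r) t (r * t - \<alpha>)) * (real m / N) ^ t"
    unfolding N_def by (rule uniform_expectation_small_union_count_le)
  also have "\<dots> \<le> real (card L) * (real m / N) ^ t"
    using sets N by (intro mult_right_mono) auto
  also have "\<dots> \<le> (exp 1 * N) ^ t / z ^ \<alpha> * (real m / N) ^ t"
    using lists z N by (intro mult_right_mono) (auto simp: pos_le_divide_eq)
  also have "\<dots> = exp (real t) * (real t ^ \<alpha> * real r ^ (2 * \<alpha>) * real m ^ t / real n ^ \<alpha>)"
  proof -
    have "real T ^ \<alpha> = real t ^ \<alpha>"
      using \<alpha> by (cases "t = 0") (simp_all add: T_def)
    then show ?thesis
      using N rT rn
      by (simp add: z_def power_divide power_mult_distrib field_simps flip: exp_of_nat_mult power_mult)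
  qed
  finally show ?thesis .
qed

lemma uniform_expectation_nonneg: "(\<And>H. f H \<ge> 0) \<Longrightarrow> uniform_expectation r n m f \<ge> 0"
  unfolding uniform_expectation_def by (simp add: sum_nonneg)

lemma eventually_square_mult_max_le:
  fixes r t :: "nat \<Rightarrow> nat"
  assumes r: "(\<lambda>n. real (r n)) \<in> o(\<lambda>n. sqrt (real n))" and t: "(\<lambda>n. real (t n)) \<in> O(\<lambda>_. 1)"
  shows "eventually (\<lambda>n. r n ^ 2 * max (t n) 1 \<le> n) at_top"
proof -
  obtain K where K: "K > 0" "eventually (\<lambda>n. norm (real (t n)) \<le> K * norm (1::real)) at_top"
    using t by (elim landau_o.bigE)
  have "eventually (\<lambda>n. norm (real (r n)) \<le> (1 / sqrt (K + 1)) * norm (sqrt (real n))) at_top"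
    using K(1) by (intro landau_o.smallD[OF r]) simp
  with K(2) show ?thesis
  proof eventually_elim
    case (elim n)
    have "real (r n) ^ 2 \<le> (sqrt (real n) / sqrt (K + 1)) ^ 2"
      using elim(2) by (intro power_mono) auto
    also have "\<dots> = real n / (K + 1)"
      using K(1) by (simp add: power_divide)
    finally have "real (r n) ^ 2 * real (max (t n) 1) \<le> real n / (K + 1) * (K + 1)"
      using elim(1) K(1) by (intro mult_mono) (auto simp: max_def)
    with K(1) have "real (r n ^ 2 * max (t n) 1) \<le> real n"
      by simp
    then show ?case
      by (simp only: of_nat_le_iff)
  qed
qed

theorem lemma2p2:
  fixes r m t \<alpha> :: "nat \<Rightarrow> nat"
  assumes r_ge: "\<And>n. r n \<ge> 3"
    and r_small: "(\<lambda>n. real (r n)) \<in> o(\<lambda>n. sqrt (real n))"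
    and t_bdd: "(\<lambda>n. real (t n)) \<in> O(\<lambda>_. 1)"
    and alpha_le: "\<And>n. \<alpha> n \<le> r n * t n"
  shows "(\<lambda>n. uniform_expectation (r n) n (m n)
            (\<lambda>H. real (small_union_count H (t n) (r n * t n - \<alpha> n))))
         \<in> O(\<lambda>n. real (t n) ^ \<alpha> n * real (r n) ^ (2 * \<alpha> n) * real (m n) ^ t n
                 / real n ^ \<alpha> n)"
proof -
  let ?E = "\<lambda>n. uniform_expectation (r n) n (m n)
              (\<lambda>H. real (small_union_count H (t n) (r n * t n - \<alpha> n)))"
  let ?B = "\<lambda>n. real (t n) ^ \<alpha> n * real (r n) ^ (2 * \<alpha> n) * real (m n) ^ t n / real n ^ \<alpha> n"
  obtain K where "eventually (\<lambda>n. norm (real (t n)) \<le> K * norm (1::real)) at_top"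
    using t_bdd by (elim landau_o.bigE)
  with eventually_square_mult_max_le[OF r_small t_bdd]
  have "eventually (\<lambda>n. ?E n \<le> exp K * ?B n) at_top"
  proof eventually_elim
    case (elim n)
    have "r n \<ge> 1"
      using r_ge[of n] by simp
    then have "?E n \<le> exp (real (t n)) * ?B n"
      using elim(1) alpha_le by (rule uniform_expectation_small_union_count_bound)
    also have "\<dots> \<le> exp K * ?B n"
      using elim(2) by (intro mult_right_mono) auto
    finally show ?case .
  qed
  then show ?thesis
    by (intro landau_o.bigI[of "exp K"])
      (auto elim!: eventually_mono simp: uniform_expectation_nonneg)
qed

end
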